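(* Let $P$ be the ReLU activation set realized by a fixed input $x_0$ and weight $w_0$, and let $u$ be the (nonzero) virtual polynomial of type $(i,L)$ induced by $P$. Then $u$ has an irreducible factorization $u=g_1\cdots g_n$ into $n$ irreducible non-constant real polynomials if and only if the $P$-active neural network has exactly $n-1$ layers containing a unique (active) node. Moreover, if $\ell_1<\dots<\ell_{n-1}$ are these layers, set $\ell_0=1$ and $\ell_n=L$. Then, up to constant factors, each factor $g_s$ is the output of the sub-network of the $P$-active network that starts at layer $\ell_{s-1}$ and ends at layer $\ell_s$. For $s=1$ this is the output of the unique node of layer $\ell_1$ computed from the input $x_0$. For $s\ge2$ it is the linear-network output at layer $\ell_s$ (at the unique node, respectively at output node $i$ when $s=n$) obtained by feeding the value $1$ into the unique node of layer $\ell_{s-1}$.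
   Context: Network: a fully connected feedforward network with $L$ layers of widths $d_1,\dots,d_L$ and no biases. The weights are the entries $w^{(k)}_{(i,j)}$ of $W_k\in\mathbb{R}^{d_{k+1}\times d_k}$, $k=1,\dots,L-1$; $w^{(k)}_{(i,j)}$ is the weight on the edge from node $i$ of layer $k$ to node $j$ of layer $k+1$. All weights together form $w\in\mathbb{R}^N$. Forward pass: $x^{(1)}=x$; $z^{(k+1)}=W_kx^{(k)}$; for hidden layers $2\le k\le L-1$, $x^{(k)}_i=\max(0,z^{(k)}_i)$; and $F_w(x)=z^{(L)}$. A hidden node is active for $(x,w)$ if its output is positive. ReLU activation set: an assignment of "active"/"inactive" to every hidden node. The activation set realized by $(x_0,w_0)$ records which hidden nodes are active. Such a set induces a linear network in which inactive nodes output $0$ and active nodes output their pre-output $z^{(k)}_j$. Virtual polynomial of type $(i,k)$ for fixed input $x$: the output of node $(i,k)$ in the induced linear network, as a polynomial in the weight variables. $P$-active neural network: the sub-network consisting of the input nodes, the $P$-active hidden nodes, the output node $i$ under consideration, and all edges between these nodes. Irreducible: a real polynomial is irreducible if it is non-constant and is not a product of two non-constant polynomials. Real polynomials factor uniquely into irreducibles up to constants. *)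

theory Defs
  imports Complex_Main "HOL-Computational_Algebra.Factorial_Ring" "HOL-Library.Poly_Mapping" "HOL-Library.Product_Lexorder"
begin

text \<open>Weight variables: the triple (k,i,j) stands for the weight on the edge from node i of
  layer k to node j of layer k+1. Layers are numbered 1..L, nodes of layer k are 0..<d k.\<close>
type_synonym wvar = "nat \<times> nat \<times> nat"

type_synonym mpoly = "(wvar \<Rightarrow>\<^sub>0 nat) \<Rightarrow>\<^sub>0 real"

definition Const :: "real \<Rightarrow> mpoly" where
  "Const c = Poly_Mapping.single 0 c"

definition Var :: "wvar \<Rightarrow> mpoly" where
  "Var v = Poly_Mapping.single (Poly_Mapping.single v 1) 1"

fun layer_out :: "(nat \<Rightarrow> nat) \<Rightarrow> nat \<Rightarrow> (nat \<Rightarrow> nat \<Rightarrow> nat \<Rightarrow> real) \<Rightarrow> (nat \<Rightarrow> real)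
    \<Rightarrow> nat \<Rightarrow> nat \<Rightarrow> real" where
  "layer_out d L w x 0 j = 0"
| "layer_out d L w x (Suc 0) j = x j"
| "layer_out d L w x (Suc (Suc k)) j =
     (let z = (\<Sum>i<d (Suc k). w (Suc k) i j * layer_out d L w x (Suc k) i)
      in if Suc (Suc k) < L then max 0 z else z)"

definition activation_set :: "(nat \<Rightarrow> nat) \<Rightarrow> nat \<Rightarrow> (nat \<Rightarrow> nat \<Rightarrow> nat \<Rightarrow> real) \<Rightarrow> (nat \<Rightarrow> real)
    \<Rightarrow> (nat \<times> nat) set" where
  "activation_set d L w x =
     {(k, j). 2 \<le> k \<and> k < L \<and> j < d k \<and> layer_out d L w x k j > 0}"

text \<open>Linear network induced by the activation set P, started at layer a with node values
  init, run for m further layers; returns the polynomial output of node j of layer a+m.\<close>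
fun lin_net :: "(nat \<Rightarrow> nat) \<Rightarrow> nat \<Rightarrow> (nat \<times> nat) set \<Rightarrow> nat \<Rightarrow> (nat \<Rightarrow> mpoly)
    \<Rightarrow> nat \<Rightarrow> nat \<Rightarrow> mpoly" where
  "lin_net d L P a init 0 j = init j"
| "lin_net d L P a init (Suc m) j =
     (if 2 \<le> a + Suc m \<and> a + Suc m < L \<and> (a + Suc m, j) \<notin> P then 0
      else (\<Sum>i<d (a + m). Var (a + m, i, j) * lin_net d L P a init m i))"

definition virtual_poly :: "(nat \<Rightarrow> nat) \<Rightarrow> nat \<Rightarrow> (nat \<times> nat) set \<Rightarrow> (nat \<Rightarrow> real)
    \<Rightarrow> nat \<Rightarrow> nat \<Rightarrow> mpoly" where
  "virtual_poly d L P x i k = lin_net d L P 1 (\<lambda>j. Const (x j)) (k - 1) i"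

definition unique_layers :: "(nat \<Rightarrow> nat) \<Rightarrow> nat \<Rightarrow> (nat \<times> nat) set \<Rightarrow> nat set" where
  "unique_layers d L P = {k. 2 \<le> k \<and> k < L \<and> card {j. j < d k \<and> (k, j) \<in> P} = 1}"

definition unique_node :: "(nat \<Rightarrow> nat) \<Rightarrow> (nat \<times> nat) set \<Rightarrow> nat \<Rightarrow> nat" where
  "unique_node d P k = (THE j. j < d k \<and> (k, j) \<in> P)"

definition split_layers :: "(nat \<Rightarrow> nat) \<Rightarrow> nat \<Rightarrow> (nat \<times> nat) set \<Rightarrow> nat list" where
  "split_layers d L P = [1] @ sorted_list_of_set (unique_layers d L P) @ [L]"

definition block_poly :: "(nat \<Rightarrow> nat) \<Rightarrow> nat \<Rightarrow> (nat \<times> nat) set \<Rightarrow> (nat \<Rightarrow> real) \<Rightarrow> nat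
    \<Rightarrow> nat \<Rightarrow> mpoly" where
  "block_poly d L P x i s =
     (let ls = split_layers d L P; n = length ls - 1;
          a = ls ! (s - 1); b = ls ! s;
          init = (if s = 1 then (\<lambda>j. Const (x j))
                  else (\<lambda>j. if j = unique_node d P a then 1 else 0));
          out = (if s = n then i else unique_node d P b)
      in lin_net d L P a init (b - a) out)"

end

theory Submission
  imports Defs "HOL-Computational_Algebra.Polynomial"
begin

text \<open>Cutting the \<open>P\<close>-active network at the layers with a unique active node factors the
  virtual polynomial \<open>u\<close> into the block polynomials, because the linear network factors through
  such a node. Each block polynomial is irreducible: it is a linear form in fresh weight variables
  whose coefficients, the nodes of the preceding layer, have no common non-unit factor, since every
  layer strictly inside a block has at least two active nodes. Finally \<open>u\<close> is multilinear, so
  complementary factors of \<open>u\<close> have disjoint variables; hence every irreducible factor of \<open>u\<close> is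
  a constant multiple of exactly one block polynomial, and the factorisation is unique.\<close>

abbreviation lookup :: "('a \<Rightarrow>\<^sub>0 'b::zero) \<Rightarrow> 'a \<Rightarrow> 'b" where
  "lookup \<equiv> poly_mapping.lookup"

abbreviation keys :: "('a \<Rightarrow>\<^sub>0 'b::zero) \<Rightarrow> 'a set" where
  "keys \<equiv> Poly_Mapping.keys"

section \<open>Evaluation of polynomials\<close>

definition is_ring_hom :: "('a::comm_ring_1 \<Rightarrow> 'b::comm_ring_1) \<Rightarrow> bool" where
  "is_ring_hom h \<longleftrightarrow> h 0 = 0 \<and> h 1 = 1 \<and> (\<forall>a b. h (a + b) = h a + h b) \<and> (\<forall>a b. h (a * b) = h a * h b)"

lemma is_ring_hom_sum: "is_ring_hom h \<Longrightarrow> h (sum g A) = (\<Sum>x\<in>A. h (g x))"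
  by (induct A rule: infinite_finite_induct) (auto simp: is_ring_hom_def)

lemma is_ring_hom_prod: "is_ring_hom h \<Longrightarrow> h (prod g A) = (\<Prod>x\<in>A. h (g x))"
  by (induct A rule: infinite_finite_induct) (auto simp: is_ring_hom_def)

lemma is_ring_hom_power: "is_ring_hom h \<Longrightarrow> h (a ^ n) = h a ^ n"
  by (induct n) (auto simp: is_ring_hom_def)

lemma is_ring_hom_id: "is_ring_hom id"
  by (simp add: is_ring_hom_def)

lemma is_ring_hom_Const: "is_ring_hom Const"
  by (simp add: is_ring_hom_def Const_def single_add mult_single)

lemma is_ring_hom_pCons: "is_ring_hom (\<lambda>r. [:r:])"
  by (simp add: is_ring_hom_def)

lemma is_ring_hom_poly: "is_ring_hom (\<lambda>p. poly p a)"
  by (simp add: is_ring_hom_def)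

lemma is_ring_hom_comp: "is_ring_hom g \<Longrightarrow> is_ring_hom h \<Longrightarrow> is_ring_hom (\<lambda>x. g (h x))"
  by (simp add: is_ring_hom_def)

definition eval_monom :: "(wvar \<Rightarrow> 'r::comm_ring_1) \<Rightarrow> (wvar \<Rightarrow>\<^sub>0 nat) \<Rightarrow> 'r" where
  "eval_monom \<phi> m = (\<Prod>v\<in>keys m. \<phi> v ^ lookup m v)"

definition eval_mpoly :: "(real \<Rightarrow> 'r::comm_ring_1) \<Rightarrow> (wvar \<Rightarrow> 'r) \<Rightarrow> mpoly \<Rightarrow> 'r" where
  "eval_mpoly \<psi> \<phi> f = (\<Sum>m\<in>keys f. \<psi> (lookup f m) * eval_monom \<phi> m)"

definition vars :: "mpoly \<Rightarrow> wvar set" where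
  "vars f = (\<Union>m\<in>keys f. keys m)"

lemma eval_monom_superset:
  "finite S \<Longrightarrow> keys m \<subseteq> S \<Longrightarrow> eval_monom \<phi> m = (\<Prod>v\<in>S. \<phi> v ^ lookup m v)"
  unfolding eval_monom_def by (rule prod.mono_neutral_left) (auto simp: in_keys_iff)

lemma eval_monom_add: "eval_monom \<phi> (a + b) = eval_monom \<phi> a * eval_monom \<phi> b"
proof -
  let ?S = "keys a \<union> keys b"
  have "eval_monom \<phi> (a + b) = (\<Prod>v\<in>?S. \<phi> v ^ lookup (a + b) v)"
    by (rule eval_monom_superset) (auto dest: subsetD[OF keys_add])
  also have "\<dots> = (\<Prod>v\<in>?S. \<phi> v ^ lookup a v) * (\<Prod>v\<in>?S. \<phi> v ^ lookup b v)"
    by (simp add: lookup_add power_add prod.distrib)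
  also have "\<dots> = eval_monom \<phi> a * eval_monom \<phi> b"
    by (simp add: eval_monom_superset[of ?S])
  finally show ?thesis .
qed

lemma eval_monom_zero [simp]: "eval_monom \<phi> 0 = 1"
  by (simp add: eval_monom_def)

lemma eval_monom_single [simp]: "eval_monom \<phi> (Poly_Mapping.single v n) = \<phi> v ^ n"
  by (cases "n = 0") (simp_all add: eval_monom_def)

lemma poly_mapping_sum_single:
  "(f :: 'a \<Rightarrow>\<^sub>0 'b::comm_monoid_add) = (\<Sum>m\<in>keys f. Poly_Mapping.single m (lookup f m))"
proof (rule poly_mapping_eqI)
  fix k
  show "lookup f k = lookup (\<Sum>m\<in>keys f. Poly_Mapping.single m (lookup f m)) k"
    by (cases "k \<in> keys f") (auto simp: lookup_sum lookup_single when_def in_keys_iff)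
qed

lemma eval_mpoly_superset:
  assumes "\<psi> 0 = 0" "finite S" "keys f \<subseteq> S"
  shows "eval_mpoly \<psi> \<phi> f = (\<Sum>m\<in>S. \<psi> (lookup f m) * eval_monom \<phi> m)"
  unfolding eval_mpoly_def
  by (rule sum.mono_neutral_left) (use assms in \<open>auto simp: in_keys_iff\<close>)

lemma eval_mpoly_zero [simp]: "eval_mpoly \<psi> \<phi> 0 = 0"
  by (simp add: eval_mpoly_def)

lemma eval_mpoly_add:
  assumes "is_ring_hom \<psi>"
  shows "eval_mpoly \<psi> \<phi> (f + g) = eval_mpoly \<psi> \<phi> f + eval_mpoly \<psi> \<phi> g"
proof -
  let ?S = "keys f \<union> keys g"
  have \<psi>0: "\<psi> 0 = 0" using assms by (simp add: is_ring_hom_def)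
  have "eval_mpoly \<psi> \<phi> (f + g) = (\<Sum>m\<in>?S. \<psi> (lookup (f + g) m) * eval_monom \<phi> m)"
    by (rule eval_mpoly_superset[where \<psi> = \<psi>]) (use \<psi>0 in \<open>auto dest: subsetD[OF keys_add]\<close>)
  also have "\<dots> = (\<Sum>m\<in>?S. \<psi> (lookup f m) * eval_monom \<phi> m) + (\<Sum>m\<in>?S. \<psi> (lookup g m) * eval_monom \<phi> m)"
    using assms by (simp add: lookup_add is_ring_hom_def distrib_right sum.distrib)
  also have "\<dots> = eval_mpoly \<psi> \<phi> f + eval_mpoly \<psi> \<phi> g"
    using eval_mpoly_superset[where \<psi> = \<psi> and S = ?S, OF \<psi>0] by simp
  finally show ?thesis .
qed

lemma eval_mpoly_sum:
  "is_ring_hom \<psi> \<Longrightarrow> eval_mpoly \<psi> \<phi> (sum g A) = (\<Sum>x\<in>A. eval_mpoly \<psi> \<phi> (g x))"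
  by (induct A rule: infinite_finite_induct) (auto simp: eval_mpoly_add)

lemma eval_mpoly_single:
  "is_ring_hom \<psi> \<Longrightarrow> eval_mpoly \<psi> \<phi> (Poly_Mapping.single m c) = \<psi> c * eval_monom \<phi> m"
  by (auto simp: eval_mpoly_def is_ring_hom_def)

lemma eval_mpoly_mult:
  assumes "is_ring_hom \<psi>"
  shows "eval_mpoly \<psi> \<phi> (f * g) = eval_mpoly \<psi> \<phi> f * eval_mpoly \<psi> \<phi> g"
proof -
  have "f * g = (\<Sum>a\<in>keys f. Poly_Mapping.single a (lookup f a)) * (\<Sum>b\<in>keys g. Poly_Mapping.single b (lookup g b))"
    by (subst (1) poly_mapping_sum_single[of f], subst (1) poly_mapping_sum_single[of g]) simp
  also have "\<dots> = (\<Sum>a\<in>keys f. \<Sum>b\<in>keys g. Poly_Mapping.single (a + b) (lookup f a * lookup g b))"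
    by (simp add: sum_product mult_single)
  finally have fg: "f * g = \<dots>" .
  have "eval_mpoly \<psi> \<phi> (f * g) = (\<Sum>a\<in>keys f. \<Sum>b\<in>keys g.
          \<psi> (lookup f a) * eval_monom \<phi> a * (\<psi> (lookup g b) * eval_monom \<phi> b))"
    unfolding fg using assms
    by (simp add: eval_mpoly_sum eval_mpoly_single eval_monom_add is_ring_hom_def mult_ac)
  also have "\<dots> = eval_mpoly \<psi> \<phi> f * eval_mpoly \<psi> \<phi> g"
    by (simp add: eval_mpoly_def sum_product)
  finally show ?thesis .
qed

lemma eval_mpoly_one: "is_ring_hom \<psi> \<Longrightarrow> eval_mpoly \<psi> \<phi> 1 = 1"
  using eval_mpoly_single[of \<psi> \<phi> 0 1]
  by (simp add: is_ring_hom_def one_poly_mapping.abs_eq single.abs_eq)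

lemma is_ring_hom_eval_mpoly: "is_ring_hom \<psi> \<Longrightarrow> is_ring_hom (eval_mpoly \<psi> \<phi>)"
  by (simp add: is_ring_hom_def eval_mpoly_add eval_mpoly_mult eval_mpoly_one)

lemma eval_mpoly_Var: "is_ring_hom \<psi> \<Longrightarrow> eval_mpoly \<psi> \<phi> (Var v) = \<phi> v"
  by (simp add: Var_def eval_mpoly_single is_ring_hom_def)

lemma eval_mpoly_Const: "is_ring_hom \<psi> \<Longrightarrow> eval_mpoly \<psi> \<phi> (Const c) = \<psi> c"
  by (simp add: Const_def eval_mpoly_single)

lemma eval_mpoly_id_Const [simp]: "eval_mpoly id w (Const r) = r"
  by (simp add: eval_mpoly_Const is_ring_hom_id)

lemma eval_mpoly_id_Var [simp]: "eval_mpoly id w (Var v) = w v"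
  by (simp add: eval_mpoly_Var is_ring_hom_id)

lemma ring_hom_apply_eval_mpoly:
  assumes "is_ring_hom h"
  shows "h (eval_mpoly \<psi> \<phi> f) = eval_mpoly (\<lambda>r. h (\<psi> r)) (\<lambda>v. h (\<phi> v)) f"
proof -
  have "h (a * b) = h a * h b" for a b using assms by (simp add: is_ring_hom_def)
  then show ?thesis unfolding eval_mpoly_def eval_monom_def
    by (simp add: is_ring_hom_sum[OF assms] is_ring_hom_prod[OF assms] is_ring_hom_power[OF assms])
qed

lemma eval_mpoly_cong:
  assumes "\<And>v. v \<in> vars f \<Longrightarrow> \<phi> v = \<phi>' v"
  shows "eval_mpoly \<psi> \<phi> f = eval_mpoly \<psi> \<phi>' f"
proof -
  have "\<phi> v = \<phi>' v" if "m \<in> keys f" "v \<in> keys m" for m v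
    using assms[of v] that unfolding vars_def by blast
  then show ?thesis unfolding eval_mpoly_def eval_monom_def
    by (intro sum.cong refl arg_cong2[where f = times] prod.cong) auto
qed

lemma eval_mpoly_closed:
  assumes "Q 0" "Q 1" "\<And>a b. Q a \<Longrightarrow> Q b \<Longrightarrow> Q (a + b)" "\<And>a b. Q a \<Longrightarrow> Q b \<Longrightarrow> Q (a * b)"
    and "\<And>r. Q (\<psi> r)" "\<And>v. v \<in> vars f \<Longrightarrow> Q (\<phi> v)"
  shows "Q (eval_mpoly \<psi> \<phi> f)"
proof -
  have sum: "Q (sum g A)" if "\<And>x. x \<in> A \<Longrightarrow> Q (g x)" for g and A :: "'b set"
    using that by (induct A rule: infinite_finite_induct) (auto simp: assms)
  have prod: "Q (prod g A)" if "\<And>x. x \<in> A \<Longrightarrow> Q (g x)" for g and A :: "'b set"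
    using that by (induct A rule: infinite_finite_induct) (auto simp: assms)
  have power: "Q (a ^ n)" if "Q a" for a n
    using that by (induct n) (auto simp: assms)
  show ?thesis
    unfolding eval_mpoly_def eval_monom_def
    by (intro sum prod power assms(4,5,6)) (auto simp: vars_def)
qed

lemma finite_vars [simp]: "finite (vars f)"
  by (simp add: vars_def)

lemma vars_zero [simp]: "vars 0 = {}"
  by (simp add: vars_def)

lemma vars_one [simp]: "vars 1 = {}"
  by (simp add: vars_def)

lemma vars_Const [simp]: "vars (Const c) = {}"
  by (simp add: vars_def Const_def)

lemma vars_Var [simp]: "vars (Var v) = {v}"
  by (simp add: vars_def Var_def)

lemma vars_add: "vars (f + g) \<subseteq> vars f \<union> vars g"
  unfolding vars_def using keys_add[of f g] by blast

lemma vars_mult: "vars (f * g) \<subseteq> vars f \<union> vars g"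
proof
  fix y assume "y \<in> vars (f * g)"
  then obtain m where m: "m \<in> keys (f * g)" "y \<in> keys m" unfolding vars_def by blast
  then obtain a b where ab: "m = a + b" "a \<in> keys f" "b \<in> keys g" using keys_mult[of f g] by blast
  have "keys (a + b) = keys a \<union> keys b" for a b :: "wvar \<Rightarrow>\<^sub>0 nat"
    by (auto simp: in_keys_iff lookup_add)
  then show "y \<in> vars f \<union> vars g" using ab m(2) unfolding vars_def by blast
qed

lemma vars_sum: "vars (sum g A) \<subseteq> (\<Union>x\<in>A. vars (g x))"
  by (induct A rule: infinite_finite_induct) (auto dest: subsetD[OF vars_add])

lemma vars_prod_list: "vars (prod_list fs) \<subseteq> (\<Union>f\<in>set fs. vars f)"
  by (induct fs) (auto dest: subsetD[OF vars_mult])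

lemma Var_power: "Var v ^ n = Poly_Mapping.single (Poly_Mapping.single v n) 1"
  by (induct n) (auto simp: Var_def mult_single single_add[symmetric])

lemma eval_monom_Var: "eval_monom Var m = Poly_Mapping.single m 1"
proof -
  have "eval_monom Var m = (\<Prod>v\<in>keys m. Poly_Mapping.single (Poly_Mapping.single v (lookup m v)) (1::real))"
    unfolding eval_monom_def by (simp add: Var_power)
  also have "\<dots> = Poly_Mapping.single (\<Sum>v\<in>keys m. Poly_Mapping.single v (lookup m v)) 1"
    by (induct rule: infinite_finite_induct) (auto simp: mult_single)
  finally show ?thesis by (simp add: poly_mapping_sum_single[of m, symmetric])
qed

lemma eval_mpoly_Const_Var: "eval_mpoly Const Var f = f"
proof -
  have "eval_mpoly Const Var f = (\<Sum>m\<in>keys f. Poly_Mapping.single m (lookup f m))"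
    unfolding eval_mpoly_def eval_monom_Var by (simp add: Const_def mult_single)
  then show ?thesis by (simp add: poly_mapping_sum_single[of f, symmetric])
qed

lemma eval_mpoly_Const_Var_on: "(\<And>v. v \<in> vars f \<Longrightarrow> \<phi> v = Var v) \<Longrightarrow> eval_mpoly Const \<phi> f = f"
  using eval_mpoly_cong[of f \<phi> Var Const] eval_mpoly_Const_Var by simp

lemma eval_mpoly_Const_Const_on:
  assumes "\<And>v. v \<in> vars f \<Longrightarrow> \<phi> v = Const (w v)"
  shows "eval_mpoly Const \<phi> f = Const (eval_mpoly id w f)"
  using eval_mpoly_cong[of f \<phi> "\<lambda>v. Const (w v)" Const] assms
    ring_hom_apply_eval_mpoly[OF is_ring_hom_Const, of id w f] by simp

lemma vars_eval_mpoly: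
  assumes "\<And>v. v \<in> vars f \<Longrightarrow> vars (\<phi> v) \<subseteq> S"
  shows "vars (eval_mpoly Const \<phi> f) \<subseteq> S"
  by (rule eval_mpoly_closed[where Q = "\<lambda>p. vars p \<subseteq> S"])
     (use assms in \<open>auto dest: subsetD[OF vars_add] subsetD[OF vars_mult]\<close>)

lemma eval_mpoly_eval_mpoly:
  "eval_mpoly id w (eval_mpoly Const \<phi> f) = eval_mpoly id (\<lambda>v. eval_mpoly id w (\<phi> v)) f"
proof -
  have "(\<lambda>r. eval_mpoly id w (Const r)) = id" by auto
  then show ?thesis
    using ring_hom_apply_eval_mpoly[OF is_ring_hom_eval_mpoly[OF is_ring_hom_id], of w Const \<phi> f] by simp
qed

lemma Const_mult: "Const a * Const b = Const (a * b)"
  by (simp add: Const_def mult_single)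

lemma Const_eq_0_iff [simp]: "Const c = 0 \<longleftrightarrow> c = 0"
  by (metis Const_def lookup_single_eq single_zero)

lemma Const_one [simp]: "Const 1 = 1"
  by (simp add: Const_def)

lemma inj_Const: "inj Const"
  by (rule injI) (metis Const_def lookup_single_eq)

section \<open>One variable at a time\<close>

text \<open>\<open>extract_var y f\<close> is \<open>f\<close> regarded as a univariate polynomial in \<open>y\<close> over the
  polynomials in the remaining variables.\<close>

definition extract_var :: "wvar \<Rightarrow> mpoly \<Rightarrow> mpoly poly" where
  "extract_var y = eval_mpoly (\<lambda>r. [:Const r:]) (\<lambda>v. if v = y then [:0, 1:] else [:Var v:])"

lemma is_ring_hom_extract_var: "is_ring_hom (extract_var y)"
  unfolding extract_var_def
  by (intro is_ring_hom_eval_mpoly is_ring_hom_comp[OF is_ring_hom_pCons is_ring_hom_Const])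

lemma extract_var_mult: "extract_var y (f * g) = extract_var y f * extract_var y g"
  using is_ring_hom_extract_var by (simp add: is_ring_hom_def)

lemma extract_var_sum: "extract_var y (sum g A) = (\<Sum>x\<in>A. extract_var y (g x))"
  by (rule is_ring_hom_sum[OF is_ring_hom_extract_var])

lemma extract_var_Var: "extract_var y (Var v) = (if v = y then [:0, 1:] else [:Var v:])"
  unfolding extract_var_def
  by (intro eval_mpoly_Var is_ring_hom_comp[OF is_ring_hom_pCons is_ring_hom_Const])

lemma extract_var_free: "y \<notin> vars f \<Longrightarrow> extract_var y f = [:f:]"
proof -
  assume y: "y \<notin> vars f"
  have "extract_var y f = eval_mpoly (\<lambda>r. [:Const r:]) (\<lambda>v. [:Var v:]) f"
    unfolding extract_var_def by (rule eval_mpoly_cong) (use y in auto)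
  also have "\<dots> = [:eval_mpoly Const Var f:]"
    using ring_hom_apply_eval_mpoly[OF is_ring_hom_pCons, of Const Var f] by simp
  finally show ?thesis by (simp add: eval_mpoly_Const_Var)
qed

lemma poly_extract_var_at:
  "poly (extract_var y f) p = eval_mpoly Const (\<lambda>v. if v = y then p else Var v) f"
proof -
  have "(\<lambda>v. poly (if v = y then [:0, 1:] else [:Var v:]) p) = (\<lambda>v. if v = y then p else Var v)"
    by auto
  then show ?thesis unfolding extract_var_def
    using ring_hom_apply_eval_mpoly[OF is_ring_hom_poly[of p]] by simp
qed

lemma poly_extract_var: "poly (extract_var y f) (Var y) = f"
proof -
  have "(\<lambda>v. if v = y then Var y else Var v) = Var" by auto
  then show ?thesis by (simp add: poly_extract_var_at eval_mpoly_Const_Var)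
qed

lemma extract_var_zero [simp]: "extract_var y 0 = 0"
  by (simp add: extract_var_def)

lemma extract_var_eq_0_iff [simp]: "extract_var y f = 0 \<longleftrightarrow> f = 0"
  using poly_extract_var[of y f] by (auto simp: extract_var_def)

lemma lookup_eval_mpoly_kill_var:
  "lookup (eval_mpoly Const (\<lambda>v. if v = y then 0 else Var v) f) m = (if y \<in> keys m then 0 else lookup f m)"
proof -
  have monom: "eval_monom (\<lambda>v. if v = y then 0 else Var v) m = (if y \<in> keys m then 0 else Poly_Mapping.single m 1)"
    for m
  proof (cases "y \<in> keys m")
    case True
    then show ?thesis unfolding eval_monom_def
      by (auto intro!: prod_zero bexI[of _ y] simp: in_keys_iff)
  next
    case False
    have "eval_monom (\<lambda>v. if v = y then 0 else Var v) m = eval_monom Var m"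
      unfolding eval_monom_def by (rule prod.cong) (use False in auto)
    then show ?thesis using False by (simp add: eval_monom_Var)
  qed
  have "eval_mpoly Const (\<lambda>v. if v = y then 0 else Var v) f =
        (\<Sum>x\<in>keys f. Poly_Mapping.single x (if y \<in> keys x then 0 else lookup f x))"
    unfolding eval_mpoly_def monom by (rule sum.cong) (auto simp: Const_def mult_single)
  then have "lookup (eval_mpoly Const (\<lambda>v. if v = y then 0 else Var v) f) m =
     (\<Sum>x\<in>keys f. if x = m then (if y \<in> keys x then 0 else lookup f x) else 0)"
    by (simp add: lookup_sum lookup_single when_def eq_commute)
  then show ?thesis by (auto simp: sum.delta' in_keys_iff)
qed

lemma degree_extract_var_eq_0_iff: "degree (extract_var y f) = 0 \<longleftrightarrow> y \<notin> vars f"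
proof
  assume deg: "degree (extract_var y f) = 0"
  then obtain c where c: "extract_var y f = [:c:]" using degree_eq_zeroE by blast
  then have "f = c" using poly_extract_var[of y f] by simp
  then have killed: "eval_mpoly Const (\<lambda>v. if v = y then 0 else Var v) f = f"
    using poly_extract_var_at[of y f 0] c by simp
  show "y \<notin> vars f"
  proof
    assume "y \<in> vars f"
    then obtain m where "m \<in> keys f" "y \<in> keys m" by (auto simp: vars_def)
    then show False using lookup_eval_mpoly_kill_var[of y f m] killed by (simp add: in_keys_iff)
  qed
qed (simp add: extract_var_free)

lemma degree_extract_var_mult:
  "f * g \<noteq> 0 \<Longrightarrow> degree (extract_var y (f * g)) = degree (extract_var y f) + degree (extract_var y g)"
  by (auto simp: extract_var_mult degree_mult_eq)

lemma vars_dvd: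
  assumes "D dvd F" "F \<noteq> 0"
  shows "vars D \<subseteq> vars F"
proof
  fix y assume "y \<in> vars D"
  obtain k where "F = D * k" using assms(1) by blast
  then have "degree (extract_var y D) \<le> degree (extract_var y F)"
    using assms(2) degree_extract_var_mult[of D k y] by simp
  with \<open>y \<in> vars D\<close> show "y \<in> vars F"
    using degree_extract_var_eq_0_iff[of y D] degree_extract_var_eq_0_iff[of y F] by linarith
qed

lemma vars_eq_empty_imp_Const: "vars f = {} \<Longrightarrow> f = Const (lookup f 0)"
proof -
  assume "vars f = {}"
  then have "keys f \<subseteq> {0}" by (auto simp: vars_def)
  then have "f = (\<Sum>m\<in>{0}. Poly_Mapping.single m (lookup f m))"
    by (subst poly_mapping_sum_single) (rule sum.mono_neutral_left, auto simp: in_keys_iff)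
  then show ?thesis by (simp add: Const_def)
qed

lemma dvd_one_iff_Const: "D dvd 1 \<longleftrightarrow> (\<exists>c. c \<noteq> 0 \<and> D = Const c)"
proof
  assume D: "D dvd 1"
  then have "vars D = {}" using vars_dvd[OF D] by auto
  then have "D = Const (lookup D 0)" by (rule vars_eq_empty_imp_Const)
  moreover have "D \<noteq> 0" using D by auto
  ultimately show "\<exists>c. c \<noteq> 0 \<and> D = Const c" by (metis Const_eq_0_iff)
next
  assume "\<exists>c. c \<noteq> 0 \<and> D = Const c"
  then obtain c where "c \<noteq> 0" "D = Const c" by blast
  then have "D * Const (1 / c) = 1" by (simp add: Const_mult)
  then show "D dvd 1" by (metis dvdI)
qed

lemma eval_mpoly_nonzero_somewhere: "f \<noteq> 0 \<Longrightarrow> \<exists>w. eval_mpoly id w f \<noteq> 0"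
proof (induct "card (vars f)" arbitrary: f rule: less_induct)
  case less
  show ?case
  proof (cases "vars f = {}")
    case True
    then have "f = Const (lookup f 0)" by (rule vars_eq_empty_imp_Const)
    then show ?thesis using less.prems by (metis Const_eq_0_iff eval_mpoly_id_Const)
  next
    case False
    then obtain y where y: "y \<in> vars f" by auto
    let ?p = "extract_var y f"
    have "\<exists>t. poly ?p (Const t) \<noteq> 0"
    proof (rule ccontr)
      assume "\<not> ?thesis"
      then have "range Const \<subseteq> {x. poly ?p x = 0}" by auto
      moreover have "finite {x. poly ?p x = 0}" using less.prems by (simp add: poly_roots_finite)
      ultimately have "finite (UNIV :: real set)"
        using finite_subset finite_imageD inj_Const by blast
      then show False using infinite_UNIV_char_0 by blast
    qed
    then obtain t where t: "poly ?p (Const t) \<noteq> 0" by blast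
    define g where "g = eval_mpoly Const (\<lambda>v. if v = y then Const t else Var v) f"
    have "vars g \<subseteq> vars f - {y}"
      unfolding g_def by (rule vars_eval_mpoly) auto
    then have "card (vars g) < card (vars f)"
      using y by (intro psubset_card_mono) auto
    moreover have "g \<noteq> 0" using t by (simp add: g_def poly_extract_var_at)
    ultimately obtain w where "eval_mpoly id w g \<noteq> 0" using less.hyps by blast
    then show ?thesis unfolding g_def eval_mpoly_eval_mpoly by blast
  qed
qed


section \<open>Factors with disjoint variables\<close>

definition partial_eval :: "wvar set \<Rightarrow> (wvar \<Rightarrow> real) \<Rightarrow> mpoly \<Rightarrow> mpoly" where
  "partial_eval T w = eval_mpoly Const (\<lambda>v. if v \<in> T then Const (w v) else Var v)"

lemma partial_eval_mult: "partial_eval T w (f * g) = partial_eval T w f * partial_eval T w g"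
  by (simp add: partial_eval_def eval_mpoly_mult is_ring_hom_Const)

lemma partial_eval_id: "vars f \<inter> T = {} \<Longrightarrow> partial_eval T w f = f"
  unfolding partial_eval_def by (rule eval_mpoly_Const_Var_on) auto

lemma partial_eval_Const: "vars f \<subseteq> T \<Longrightarrow> partial_eval T w f = Const (eval_mpoly id w f)"
  unfolding partial_eval_def by (rule eval_mpoly_Const_Const_on) auto

lemma vars_partial_eval: "vars (partial_eval T w f) \<subseteq> vars f - T"
  unfolding partial_eval_def by (rule vars_eval_mpoly) auto

lemma vars_Const_mult: "c \<noteq> 0 \<Longrightarrow> vars (Const c * f) = vars f"
  using vars_mult[of "Const c" f] vars_mult[of "Const (1 / c)" "Const c * f"]
  by (simp add: mult.assoc[symmetric] Const_mult)

lemma mult_Const_cancel: "c \<noteq> 0 \<Longrightarrow> f * Const c = g \<Longrightarrow> f = g * Const (1 / c)"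
  by (auto simp: mult.assoc Const_mult)

text \<open>Specialising the variables in \<open>Z\<close> to a point where \<open>C\<close> does not vanish turns
  \<open>A * C = g * h\<close> into \<open>A * Const c = g * h'\<close>.\<close>

lemma dvd_if_vars_separated:
  assumes eq: "A * C = g * h" and "C \<noteq> 0"
    and A: "vars A \<inter> Z = {}" and C: "vars C \<subseteq> Z" and g: "vars g \<inter> Z = {}"
  shows "g dvd A"
proof -
  obtain w where w: "eval_mpoly id w C \<noteq> 0" using eval_mpoly_nonzero_somewhere \<open>C \<noteq> 0\<close> by blast
  let ?c = "eval_mpoly id w C"
  have "A * Const ?c = g * partial_eval Z w h"
    using arg_cong[OF eq, of "partial_eval Z w"]
    by (simp add: partial_eval_mult partial_eval_id[OF A] partial_eval_Const[OF C] partial_eval_id[OF g])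
  then have "A = g * (partial_eval Z w h * Const (1 / ?c))"
    by (subst mult.assoc[symmetric]) (rule mult_Const_cancel[OF w])
  then show ?thesis by (rule dvdI)
qed

lemma irreducible_vars_inside_or_outside:
  assumes eq: "A * C = g * h" and irr: "irreducible g" and "h \<noteq> 0"
    and gh: "vars g \<inter> vars h = {}" and A: "vars A \<inter> Z = {}" and C: "vars C \<subseteq> Z"
  shows "vars g \<subseteq> Z \<or> vars g \<inter> Z = {}"
proof -
  obtain w where w: "eval_mpoly id w h \<noteq> 0" using eval_mpoly_nonzero_somewhere \<open>h \<noteq> 0\<close> by blast
  define T where "T = - vars g"
  let ?c = "eval_mpoly id w h"
  let ?A = "partial_eval T w A" and ?C = "partial_eval T w C * Const (1 / ?c)"
  have gT: "vars g \<inter> T = {}" and hT: "vars h \<subseteq> T" using gh by (auto simp: T_def)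
  have "g * Const ?c = ?A * partial_eval T w C"
    using arg_cong[OF eq[symmetric], of "partial_eval T w"]
    by (simp add: partial_eval_mult partial_eval_id[OF gT] partial_eval_Const[OF hT])
  then have g: "g = ?A * ?C"
    by (subst mult.assoc[symmetric]) (rule mult_Const_cancel[OF w])
  have vA: "vars ?A \<subseteq> - Z" using vars_partial_eval[of T w A] A by auto
  have vC: "vars ?C \<subseteq> Z"
    using vars_partial_eval[of T w C] C vars_mult[of "partial_eval T w C" "Const (1 / ?c)"] by auto
  from irreducibleD[OF irr g] show ?thesis
  proof
    assume "?A dvd 1"
    then obtain a where "a \<noteq> 0" "?A = Const a" by (auto simp: dvd_one_iff_Const)
    then have "vars g = vars ?C" using g vars_Const_mult by simp
    then show ?thesis using vC by blast
  next
    assume "?C dvd 1"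
    then obtain a where "a \<noteq> 0" "?C = Const a" by (auto simp: dvd_one_iff_Const)
    then have "vars g = vars ?A" using g vars_Const_mult[of a ?A] by (simp add: mult.commute)
    then show ?thesis using vA by blast
  qed
qed

lemma irreducible_vars_nonempty: "irreducible f \<Longrightarrow> vars f \<noteq> {}"
proof
  assume irr: "irreducible f" and "vars f = {}"
  then have f: "f = Const (lookup f 0)" by (intro vars_eq_empty_imp_Const)
  have "f \<noteq> 0" using irr by auto
  then have "lookup f 0 \<noteq> 0" using f by (metis Const_eq_0_iff)
  then have "f dvd 1" using f dvd_one_iff_Const by blast
  with irr show False by (simp add: irreducible_not_unit)
qed

lemma irreducible_dvd_irreducible:
  assumes g: "irreducible g" and f: "irreducible f" and "g dvd f"
  shows "\<exists>c. c \<noteq> 0 \<and> g = Const c * f"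
proof -
  obtain k where k: "f = g * k" using \<open>g dvd f\<close> by blast
  then have "k dvd 1" using irreducibleD[OF f k] irreducible_not_unit[OF g] by blast
  then obtain c where c: "c \<noteq> 0" "k = Const c" by (auto simp: dvd_one_iff_Const)
  then have "g = Const (1 / c) * f" using k by (simp add: mult.left_commute Const_mult)
  then show ?thesis using c by (intro exI[of _ "1 / c"]) simp
qed

definition multilinear :: "mpoly \<Rightarrow> bool" where
  "multilinear f \<longleftrightarrow> (\<forall>y. degree (extract_var y f) \<le> 1)"

lemma multilinearD: "multilinear f \<Longrightarrow> degree (extract_var y f) \<le> 1"
  unfolding multilinear_def by (erule allE)

lemma var_not_in_both_factors:
  assumes "degree (extract_var y (f * g)) \<le> 1" "f * g \<noteq> 0"
  shows "y \<notin> vars f \<or> y \<notin> vars g"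
proof -
  have "degree (extract_var y f) + degree (extract_var y g) \<le> 1"
    using assms degree_extract_var_mult[of f g y] by simp
  then show ?thesis
    using degree_extract_var_eq_0_iff[of y f] degree_extract_var_eq_0_iff[of y g] by linarith
qed

lemma vars_disjoint_if_multilinear:
  "multilinear (f * g) \<Longrightarrow> f * g \<noteq> 0 \<Longrightarrow> vars f \<inter> vars g = {}"
  using var_not_in_both_factors[OF multilinearD] by blast

lemma multilinear_factor:
  assumes "multilinear (f * g)" "f * g \<noteq> 0"
  shows "multilinear g"
  unfolding multilinear_def
proof
  fix y
  have "degree (extract_var y f) + degree (extract_var y g) \<le> 1"
    using multilinearD[OF assms(1), of y] degree_extract_var_mult[OF assms(2), of y] by simp
  then show "degree (extract_var y g) \<le> 1" by simp
qed

abbreviation disjoint_vars :: "mpoly list \<Rightarrow> bool" where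
  "disjoint_vars \<equiv> sorted_wrt (\<lambda>f g. vars f \<inter> vars g = {})"

lemma disjoint_vars_nth:
  assumes "disjoint_vars fs" "s < length fs" "t < length fs" "s \<noteq> t"
  shows "vars (fs ! s) \<inter> vars (fs ! t) = {}"
  using assms by (cases "s < t") (auto simp: sorted_wrt_iff_nth_less Int_commute dest: not_less_iff_gr_or_eq[THEN iffD1])

lemma disjoint_vars_if_multilinear:
  "multilinear (prod_list fs) \<Longrightarrow> prod_list fs \<noteq> 0 \<Longrightarrow> disjoint_vars fs"
proof (induct fs)
  case (Cons f fs)
  have "vars f \<inter> vars (prod_list fs) = {}"
    using Cons.prems vars_disjoint_if_multilinear by simp
  moreover have "vars g \<subseteq> vars (prod_list fs)" if "g \<in> set fs" for g
    using that Cons.prems by (intro vars_dvd prod_list_dvd) auto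
  moreover have "disjoint_vars fs"
    using Cons multilinear_factor[of f "prod_list fs"] by simp
  ultimately show ?case by auto
qed simp

lemma irreducible_dvd_factor_of_disjoint_prod:
  assumes "\<forall>f\<in>set fs. irreducible f" "disjoint_vars fs"
    and "irreducible g" "g * h = prod_list fs" "vars g \<inter> vars h = {}"
  shows "\<exists>s<length fs. g dvd fs ! s"
  using assms
proof (induct fs arbitrary: h)
  case Nil
  then have "g dvd 1" by (metis dvd_triv_left prod_list.Nil)
  then show ?case using Nil.prems(3) irreducible_not_unit by blast
next
  case (Cons f fs)
  let ?A = "prod_list fs"
  have eq: "?A * f = g * h" using Cons.prems(4) by (simp add: mult.commute)
  have nz: "?A * f \<noteq> 0" using Cons.prems(1) by (auto simp: prod_list_zero_iff)
  then have "h \<noteq> 0" "?A \<noteq> 0" "f \<noteq> 0" using eq by auto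
  have Af: "vars ?A \<inter> vars f = {}" using vars_prod_list[of fs] Cons.prems(2) by auto
  have "vars g \<subseteq> vars f \<or> vars g \<inter> vars f = {}"
    by (rule irreducible_vars_inside_or_outside[OF eq Cons.prems(3) \<open>h \<noteq> 0\<close> Cons.prems(5) Af order_refl])
  then show ?case
  proof
    assume "vars g \<subseteq> vars f"
    have "f * ?A = g * h" using eq by (simp add: mult.commute)
    then have "g dvd f"
      by (rule dvd_if_vars_separated[where Z = "- vars f"]) (use \<open>?A \<noteq> 0\<close> Af \<open>vars g \<subseteq> vars f\<close> in auto)
    then show ?thesis by force
  next
    assume "vars g \<inter> vars f = {}"
    then have "g dvd ?A" by (rule dvd_if_vars_separated[OF eq \<open>f \<noteq> 0\<close> Af order_refl])
    then obtain h' where h': "?A = g * h'" by (rule dvdE)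
    have "g * h = g * (h' * f)" by (simp only: eq[symmetric] h' mult.assoc)
    moreover have "g \<noteq> 0" using Cons.prems(3) by auto
    ultimately have "h = h' * f" by simp
    then have "vars h' \<subseteq> vars h" using \<open>h \<noteq> 0\<close> by (intro vars_dvd) auto
    then have "\<exists>s<length fs. g dvd fs ! s"
      using Cons.prems h' by (intro Cons.hyps[of h']) auto
    then show ?thesis by force
  qed
qed

lemma irreducible_factor_associated:
  assumes fs: "\<forall>f\<in>set fs. irreducible f" and ml: "multilinear (prod_list fs)"
    and g: "irreducible g" and "g dvd prod_list fs"
  shows "\<exists>s<length fs. \<exists>c. c \<noteq> 0 \<and> g = Const c * fs ! s"
proof -
  obtain h where h: "prod_list fs = g * h" using \<open>g dvd prod_list fs\<close> by (rule dvdE)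
  have nz: "prod_list fs \<noteq> 0" using fs by (auto simp: prod_list_zero_iff)
  have "vars g \<inter> vars h = {}" using vars_disjoint_if_multilinear ml nz unfolding h by blast
  then obtain s where "s < length fs" "g dvd fs ! s"
    using irreducible_dvd_factor_of_disjoint_prod[OF fs disjoint_vars_if_multilinear[OF ml nz] g h[symmetric]]
    by blast
  then show ?thesis using irreducible_dvd_irreducible[OF g] fs by auto
qed

lemma associated_factors_inj:
  assumes gs: "\<forall>g\<in>set gs. irreducible g" and fs: "\<forall>f\<in>set fs. irreducible f"
    and ml: "multilinear (prod_list fs)" and eq: "prod_list gs = prod_list fs"
  obtains \<sigma> where "inj_on \<sigma> {..<length gs}" "\<sigma> ` {..<length gs} \<subseteq> {..<length fs}"
    and "\<forall>k<length gs. \<exists>c. c \<noteq> 0 \<and> gs ! k = Const c * fs ! \<sigma> k"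
proof -
  have "\<forall>k<length gs. \<exists>s. s < length fs \<and> (\<exists>c. c \<noteq> 0 \<and> gs ! k = Const c * fs ! s)"
  proof (intro allI impI)
    fix k assume "k < length gs"
    then have k: "gs ! k \<in> set gs" by simp
    then have "gs ! k dvd prod_list fs" using eq prod_list_dvd by metis
    then show "\<exists>s. s < length fs \<and> (\<exists>c. c \<noteq> 0 \<and> gs ! k = Const c * fs ! s)"
      using irreducible_factor_associated[OF fs ml] gs k by blast
  qed
  then obtain \<sigma> where \<sigma>: "\<forall>k<length gs. \<sigma> k < length fs \<and> (\<exists>c. c \<noteq> 0 \<and> gs ! k = Const c * fs ! \<sigma> k)"
    unfolding choice_iff' by blast
  have "prod_list gs \<noteq> 0" using gs by (auto simp: prod_list_zero_iff)
  then have disj: "disjoint_vars gs"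
    using disjoint_vars_if_multilinear ml eq by simp
  have vars: "vars (gs ! k) = vars (fs ! \<sigma> k)" if "k < length gs" for k
    using \<sigma> that vars_Const_mult by auto
  have "inj_on \<sigma> {..<length gs}"
  proof (rule inj_onI, rule ccontr)
    fix k l assume kl: "k \<in> {..<length gs}" "l \<in> {..<length gs}" "\<sigma> k = \<sigma> l" "k \<noteq> l"
    then have "vars (gs ! k) = vars (gs ! l)" using vars by simp
    moreover have "vars (gs ! k) \<noteq> {}" using gs kl irreducible_vars_nonempty by auto
    ultimately show False using disjoint_vars_nth[OF disj, of k l] kl by auto
  qed
  then show ?thesis using that \<sigma> by auto
qed

text \<open>Uniqueness is proved without knowing that \<open>mpoly\<close> is factorial: in a multilinear
  polynomial complementary factors have disjoint variables, which pins every irreducible factor to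
  a single factor of any other factorisation.\<close>

lemma multilinear_unique_factorization:
  assumes gs: "\<forall>g\<in>set gs. irreducible g" and fs: "\<forall>f\<in>set fs. irreducible f"
    and ml: "multilinear (prod_list fs)" and eq: "prod_list gs = prod_list fs"
  shows "length gs = length fs \<and> (\<exists>p. bij_betw p {..<length gs} {..<length gs} \<and>
            (\<forall>s<length gs. \<exists>c. c \<noteq> 0 \<and> gs ! p s = Const c * fs ! s))"
proof -
  obtain \<sigma> where "inj_on \<sigma> {..<length gs}" "\<sigma> ` {..<length gs} \<subseteq> {..<length fs}"
    by (rule associated_factors_inj[OF gs fs ml eq])
  from card_inj_on_le[OF this] have le: "length gs \<le> length fs" by simp
  from ml eq have ml': "multilinear (prod_list gs)" by simp
  obtain p where p: "inj_on p {..<length fs}" "p ` {..<length fs} \<subseteq> {..<length gs}"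
    and assoc: "\<forall>s<length fs. \<exists>c. c \<noteq> 0 \<and> fs ! s = Const c * gs ! p s"
    by (rule associated_factors_inj[OF fs gs ml' eq[symmetric]])
  from card_inj_on_le[OF p] le have len: "length gs = length fs" by simp
  have "p ` {..<length gs} = {..<length gs}"
    using endo_inj_surj[of "{..<length gs}" p] p len by simp
  then have "bij_betw p {..<length gs} {..<length gs}"
    using p len by (simp add: bij_betw_def)
  moreover have "\<exists>c. c \<noteq> 0 \<and> gs ! p s = Const c * fs ! s" if s: "s < length gs" for s
  proof -
    obtain c where c: "c \<noteq> 0" "fs ! s = Const c * gs ! p s" using assoc s len by auto
    then have "gs ! p s = Const (1 / c) * fs ! s" by (simp add: mult.assoc[symmetric] Const_mult)
    then show ?thesis using c(1) by (intro exI[of _ "1 / c"]) simp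
  qed
  ultimately show ?thesis using len by blast
qed

section \<open>Linear forms in fresh variables\<close>

lemma degree_extract_var_Var_mult:
  assumes "y = v \<Longrightarrow> y \<notin> vars q" and "y \<noteq> v \<Longrightarrow> degree (extract_var y q) \<le> 1"
  shows "degree (extract_var y (Var v * q)) \<le> 1"
proof (cases "y = v")
  case True
  then show ?thesis using assms(1) by (simp add: extract_var_mult extract_var_Var extract_var_free)
next
  case False
  then show ?thesis using assms(2) by (simp add: extract_var_mult extract_var_Var)
qed

lemma coeff_extract_var_mult_free:
  "y \<notin> vars g \<Longrightarrow> coeff (extract_var y (f * g)) 1 = coeff (extract_var y f) 1 * g"
  by (simp add: extract_var_mult extract_var_free)

lemma coeff_extract_var_linear_form:
  fixes n :: nat
  assumes "inj_on z {..<n}" "i0 < n" "\<forall>i<n. z i0 \<notin> vars (q i)"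
  shows "coeff (extract_var (z i0) (\<Sum>i<n. Var (z i) * q i)) 1 = q i0"
proof -
  have "coeff (extract_var (z i0) (\<Sum>i<n. Var (z i) * q i)) 1 =
        (\<Sum>i<n. coeff (extract_var (z i0) (Var (z i)) * [:q i:]) 1)"
    using assms(3) by (simp add: extract_var_sum extract_var_mult extract_var_free coeff_sum)
  also have "\<dots> = (\<Sum>i<n. if i = i0 then q i else 0)"
    using assms(1,2) by (intro sum.cong) (auto simp: extract_var_Var inj_on_eq_iff)
  also have "\<dots> = q i0" using assms(2) by simp
  finally show ?thesis .
qed

locale linear_form =
  fixes B :: mpoly and z :: "nat \<Rightarrow> wvar" and q :: "nat \<Rightarrow> mpoly" and n :: nat
  assumes B: "B = (\<Sum>i<n. Var (z i) * q i)"
    and inj: "inj_on z {..<n}"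
    and fresh: "\<forall>i<n. \<forall>i'<n. z i' \<notin> vars (q i)"
begin

lemma coeff_extract_var: "i < n \<Longrightarrow> coeff (extract_var (z i) B) 1 = q i"
  unfolding B using inj fresh by (intro coeff_extract_var_linear_form) auto

lemma degree_extract_var: "i < n \<Longrightarrow> degree (extract_var (z i) B) \<le> 1"
  unfolding B extract_var_sum using fresh
  by (intro degree_sum_le degree_extract_var_Var_mult) (auto simp: degree_extract_var_eq_0_iff[symmetric])

text \<open>The coefficient of \<open>z i0\<close> in \<open>B = F * G\<close> is a multiple of \<open>F\<close> once \<open>z i0\<close> does not occur in
  \<open>F\<close>; then no \<open>z i\<close> occurs in \<open>F\<close> at all, and the same argument applies to every coefficient.\<close>

lemma factor_dvd_coeffs:
  assumes FG: "B = F * G" and i0: "i0 < n" "q i0 \<noteq> 0" "z i0 \<notin> vars F"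
  shows "\<forall>i<n. F dvd q i"
proof -
  have coeff: "q i = coeff (extract_var (z i) G) 1 * F" if "i < n" "z i \<notin> vars F" for i
    using coeff_extract_var[OF that(1)] coeff_extract_var_mult_free[OF that(2), of G] FG
    by (simp add: mult.commute)
  have "vars F \<subseteq> vars (q i0)"
    using coeff[OF i0(1,3)] i0(2) by (intro vars_dvd) auto
  then have "z i \<notin> vars F" if "i < n" for i using fresh i0(1) that by blast
  then show ?thesis using coeff by auto
qed

lemma irreducible_if_coprime:
  assumes "B \<noteq> 0" and coprime: "\<forall>D. (\<forall>i<n. D dvd q i) \<longrightarrow> D dvd 1"
  shows "irreducible B"
proof -
  obtain i0 where i0: "i0 < n" "q i0 \<noteq> 0"
    using \<open>B \<noteq> 0\<close> unfolding B by (metis (no_types, lifting) lessThan_iff mult_zero_right sum.neutral)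
  have "z i0 \<in> vars B"
  proof (rule ccontr)
    assume "z i0 \<notin> vars B"
    then have "coeff (extract_var (z i0) B) 1 = 0" by (simp add: extract_var_free)
    then show False using coeff_extract_var[OF i0(1)] i0(2) by simp
  qed
  then have "\<not> B dvd 1" by (auto simp: dvd_one_iff_Const)
  moreover have "F dvd 1 \<or> G dvd 1" if FG: "B = F * G" for F G
  proof -
    have "z i0 \<notin> vars F \<or> z i0 \<notin> vars G"
      using var_not_in_both_factors degree_extract_var[OF i0(1)] FG \<open>B \<noteq> 0\<close> by blast
    then show ?thesis
      using factor_dvd_coeffs[OF FG i0] factor_dvd_coeffs[of G F, OF _ i0] FG coprime
      by (auto simp: mult.commute)
  qed
  ultimately show ?thesis using \<open>B \<noteq> 0\<close> by (auto intro: irreducibleI)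
qed

end

section \<open>Linear networks\<close>

lemma vars_lin_net:
  assumes "\<forall>j. vars (init j) = {}"
  shows "vars (lin_net d L P a init m j) \<subseteq>
     {v. a \<le> fst v \<and> fst v < a + m \<and> (Suc (fst v) = a + m \<longrightarrow> snd (snd v) = j)}"
proof (induct m arbitrary: j)
  case 0
  then show ?case using assms by simp
next
  case (Suc m)
  have "vars (\<Sum>i<d (a + m). Var (a + m, i, j) * lin_net d L P a init m i) \<subseteq>
     (\<Union>i<d (a + m). vars (Var (a + m, i, j) * lin_net d L P a init m i))"
    by (rule vars_sum)
  also have "\<dots> \<subseteq> {v. a \<le> fst v \<and> fst v < a + Suc m \<and> (Suc (fst v) = a + Suc m \<longrightarrow> snd (snd v) = j)}"
    using vars_mult[of "Var (a + m, i, j)" "lin_net d L P a init m i" for i] Suc by fastforce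
  finally show ?case by simp
qed

lemma multilinear_lin_net:
  assumes "\<forall>j. vars (init j) = {}"
  shows "multilinear (lin_net d L P a init m j)"
proof -
  have "degree (extract_var y (lin_net d L P a init m j)) \<le> 1" for y
  proof (induct m arbitrary: j)
    case 0
    then show ?case using assms by (simp add: extract_var_free)
  next
    case (Suc m)
    have "y = (a + m, i, j) \<Longrightarrow> y \<notin> vars (lin_net d L P a init m i)" for i
      using vars_lin_net[OF assms, of d L P a m i] by auto
    then have "degree (extract_var y (\<Sum>i<d (a + m). Var (a + m, i, j) * lin_net d L P a init m i)) \<le> 1"
      unfolding extract_var_sum using Suc by (intro degree_sum_le degree_extract_var_Var_mult) auto
    then show ?case by simp
  qed
  then show ?thesis by (simp add: multilinear_def)
qed

lemma lin_net_through_unique_node: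
  assumes act: "\<forall>j. (a + m, j) \<in> P \<longleftrightarrow> j = c" and "2 \<le> a + m" "a + m < L" "0 < m"
  shows "lin_net d L P a init (m + r) j =
         lin_net d L P a init m c * lin_net d L P (a + m) (\<lambda>j. if j = c then 1 else 0) r j"
proof (induct r arbitrary: j)
  case 0
  obtain m' where "m = Suc m'" using \<open>0 < m\<close> by (cases m) auto
  then show ?case using act assms(2,3) by auto
next
  case (Suc r)
  let ?M = "lin_net d L P a init m c"
  let ?N = "lin_net d L P (a + m) (\<lambda>j. if j = c then 1 else 0)"
  have "lin_net d L P a init (m + Suc r) j = lin_net d L P a init (Suc (m + r)) j" by simp
  also have "\<dots> = (if 2 \<le> a + m + Suc r \<and> a + m + Suc r < L \<and> (a + m + Suc r, j) \<notin> P then 0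
      else (\<Sum>i<d (a + m + r). Var (a + m + r, i, j) * (?M * ?N r i)))"
    by (simp only: lin_net.simps(2) Suc add.assoc add_Suc_right)
  also have "\<dots> = ?M * ?N (Suc r) j"
    by (simp add: sum_distrib_left mult_ac)
  finally show ?case .
qed

lemma lin_net_zero_propagates:
  assumes "\<forall>j<d (a + m). lin_net d L P a init m j = 0"
  shows "lin_net d L P a init (Suc (m + r)) j = 0"
proof (induct r arbitrary: j)
  case 0
  then show ?case using assms by simp
next
  case (Suc r)
  show ?case unfolding lin_net.simps(2)[of d L P a init "m + Suc r" j] using Suc by simp
qed

lemma eval_lin_net_activation_set:
  assumes P: "P = activation_set d L w x" and "j < d (Suc m)"
  shows "eval_mpoly id (\<lambda>(k, i, j). w k i j) (lin_net d L P 1 (\<lambda>j. Const (x j)) m j) =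
         layer_out d L w x (Suc m) j"
  using assms(2)
proof (induct m arbitrary: j)
  case 0
  then show ?case by (simp add: eval_mpoly_Const is_ring_hom_def)
next
  case (Suc m)
  let ?z = "\<Sum>i<d (Suc m). w (Suc m) i j * layer_out d L w x (Suc m) i"
  have "eval_mpoly id (\<lambda>(k, i, j). w k i j) (lin_net d L P 1 (\<lambda>j. Const (x j)) m i) =
        layer_out d L w x (Suc m) i" if "i < d (Suc m)" for i
    using Suc.hyps[OF that] by (simp add: id_def)
  then have pre: "eval_mpoly id (\<lambda>(k, i, j). w k i j)
      (\<Sum>i<d (Suc m). Var (Suc m, i, j) * lin_net d L P 1 (\<lambda>j. Const (x j)) m i) = ?z"
    by (simp add: eval_mpoly_sum eval_mpoly_mult is_ring_hom_id)
  have out: "layer_out d L w x (Suc (Suc m)) j = (if Suc (Suc m) < L then max 0 ?z else ?z)"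
    by (simp add: Let_def)
  show ?case
  proof (cases "Suc (Suc m) < L")
    case hidden: True
    then have "(Suc (Suc m), j) \<in> P \<longleftrightarrow> ?z > 0"
      using Suc.prems out by (auto simp: P activation_set_def simp del: layer_out.simps)
    then show ?thesis using pre out hidden by (auto simp: id_def)
  next
    case False
    then show ?thesis using pre out by (simp add: id_def)
  qed
qed

section \<open>The blocks of the active network\<close>

locale active_network =
  fixes d :: "nat \<Rightarrow> nat" and L :: nat and x0 :: "nat \<Rightarrow> real"
    and w0 :: "nat \<Rightarrow> nat \<Rightarrow> nat \<Rightarrow> real" and i :: nat and P :: "(nat \<times> nat) set"
  assumes L: "2 \<le> L" and P: "P = activation_set d L w0 x0"
    and virtual_poly_nonzero: "virtual_poly d L P x0 i L \<noteq> 0"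
begin

abbreviation "U \<equiv> unique_layers d L P"
abbreviation "cuts \<equiv> split_layers d L P"
abbreviation "n \<equiv> card U + 1"
abbreviation "X \<equiv> (\<lambda>j. Const (x0 j))"

lemma active_node_bounds: "(k, j) \<in> P \<Longrightarrow> j < d k \<and> 2 \<le> k \<and> k < L"
  using P by (simp add: activation_set_def)

lemma finite_unique_layers: "finite U"
  by (rule finite_subset[of _ "{..<L}"]) (auto simp: unique_layers_def)

lemma unique_layer_node:
  assumes "k \<in> U"
  shows "2 \<le> k \<and> k < L \<and> unique_node d P k < d k \<and> (\<forall>j. (k, j) \<in> P \<longleftrightarrow> j = unique_node d P k)"
proof -
  have card: "card {j. j < d k \<and> (k, j) \<in> P} = 1" and k: "2 \<le> k" "k < L"
    using assms by (auto simp: unique_layers_def)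
  from card obtain c where c: "{j. j < d k \<and> (k, j) \<in> P} = {c}" by (rule card_1_singletonE)
  then have "unique_node d P k = c" unfolding unique_node_def by auto
  moreover have "(k, j) \<in> P \<longleftrightarrow> j = c" for j using c active_node_bounds[of k j] by blast
  ultimately show ?thesis using c k by auto
qed

lemma cuts_eq: "cuts = 1 # sorted_list_of_set U @ [L]"
  by (simp add: split_layers_def)

lemma length_cuts: "length cuts = n + 1"
  using finite_unique_layers by (simp add: cuts_eq)

lemma cuts_first: "cuts ! 0 = 1"
  by (simp add: cuts_eq)

lemma cuts_last: "cuts ! n = L"
  using finite_unique_layers by (simp add: cuts_eq nth_append)

lemma cuts_inner:
  assumes "0 < t" "t < n"
  shows "cuts ! t \<in> U"
proof -
  obtain r where r: "t = Suc r" using assms(1) by (cases t) auto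
  then have "r < length (sorted_list_of_set U)" using assms(2) finite_unique_layers by simp
  moreover have "cuts ! t = sorted_list_of_set U ! r" using r calculation by (simp add: cuts_eq nth_append)
  ultimately show ?thesis using finite_unique_layers by (metis nth_mem set_sorted_list_of_set)
qed

lemma cuts_strict_mono: "t < t' \<Longrightarrow> t' \<le> n \<Longrightarrow> cuts ! t < cuts ! t'"
proof -
  have "\<forall>k\<in>set (sorted_list_of_set U). 1 < k \<and> k < L"
    using finite_unique_layers by (auto simp: unique_layers_def)
  then have "sorted_wrt (<) cuts"
    using finite_unique_layers L strict_sorted_list_of_set[of U] by (auto simp: cuts_eq sorted_wrt_append)
  then show "t < t' \<Longrightarrow> t' \<le> n \<Longrightarrow> cuts ! t < cuts ! t'"
    using sorted_wrt_nth_less length_cuts by fastforce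
qed

lemma cuts_less_iff: "t \<le> n \<Longrightarrow> t' \<le> n \<Longrightarrow> cuts ! t < cuts ! t' \<longleftrightarrow> t < t'"
  by (metis cuts_strict_mono linorder_neqE_nat order_less_asym order_less_irrefl)

lemma cuts_range: "t \<le> n \<Longrightarrow> 1 \<le> cuts ! t \<and> cuts ! t \<le> L"
  using cuts_strict_mono[of 0 t] cuts_strict_mono[of t n] cuts_first cuts_last
  by (cases "t = 0"; cases "t = n") auto

lemma not_unique_layer_between:
  assumes "t < n" "cuts ! t < k" "k < cuts ! Suc t"
  shows "k \<notin> U"
proof
  assume "k \<in> U"
  then obtain r where r: "r < card U" "sorted_list_of_set U ! r = k"
    using finite_unique_layers by (metis in_set_conv_nth length_sorted_list_of_set set_sorted_list_of_set)
  then have "cuts ! Suc r = k" by (simp add: cuts_eq nth_append)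
  then have "t < Suc r" "Suc r < Suc t"
    using assms cuts_less_iff[of t "Suc r"] cuts_less_iff[of "Suc r" "Suc t"] r(1) by auto
  then show False by simp
qed

lemma virtual_poly_nonzero_if_active:
  assumes "(k, j) \<in> P"
  shows "virtual_poly d L P x0 j k \<noteq> 0"
  unfolding virtual_poly_def
proof
  assume "lin_net d L P 1 X (k - 1) j = 0"
  moreover have "j < d k" "2 \<le> k" using active_node_bounds[OF assms] by auto
  then have "eval_mpoly id (\<lambda>(k, i, j). w0 k i j) (lin_net d L P 1 X (k - 1) j) = layer_out d L w0 x0 k j"
    using eval_lin_net_activation_set[OF P, of j "k - 1"] by simp
  moreover have "layer_out d L w0 x0 k j > 0" using assms by (simp add: P activation_set_def del: layer_out.simps)
  ultimately show False by simp
qed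

text \<open>Block \<open>s\<close> (for \<open>1 \<le> s \<le> n\<close>) is the linear network between the layers \<open>cuts ! (s - 1)\<close> and
  \<open>cuts ! s\<close>; \<open>block_node s k j\<close> is the output of node \<open>j\<close> of layer \<open>k\<close> within it.\<close>

definition block_input :: "nat \<Rightarrow> nat \<Rightarrow> mpoly" where
  "block_input s = (if s = 1 then X else (\<lambda>j. if j = unique_node d P (cuts ! (s - 1)) then 1 else 0))"

definition block_output :: "nat \<Rightarrow> nat" where
  "block_output s = (if s = n then i else unique_node d P (cuts ! s))"

definition block_node :: "nat \<Rightarrow> nat \<Rightarrow> nat \<Rightarrow> mpoly" where
  "block_node s k j = lin_net d L P (cuts ! (s - 1)) (block_input s) (k - cuts ! (s - 1)) j"

abbreviation "blocks \<equiv> map (\<lambda>s. block_poly d L P x0 i (Suc s)) [0..<n]"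

lemma block_poly_eq_block_node:
  "1 \<le> s \<Longrightarrow> s \<le> n \<Longrightarrow> block_poly d L P x0 i s = block_node s (cuts ! s) (block_output s)"
  unfolding block_poly_def Let_def block_node_def block_input_def block_output_def
  using length_cuts by simp

lemma vars_block_input [simp]: "vars (block_input s j) = {}"
  by (simp add: block_input_def)

lemma block_node_Suc:
  assumes "cuts ! (s - 1) \<le> k"
  shows "block_node s (Suc k) j =
    (if 2 \<le> Suc k \<and> Suc k < L \<and> (Suc k, j) \<notin> P then 0 else (\<Sum>i'<d k. Var (k, i', j) * block_node s k i'))"
proof -
  have "Suc k - cuts ! (s - 1) = Suc (k - cuts ! (s - 1))" "cuts ! (s - 1) + Suc (k - cuts ! (s - 1)) = Suc k"
    "cuts ! (s - 1) + (k - cuts ! (s - 1)) = k" using assms by auto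
  then show ?thesis unfolding block_node_def lin_net.simps by simp
qed

lemma vars_block_node:
  "cuts ! (s - 1) \<le> k \<Longrightarrow>
   vars (block_node s k j) \<subseteq> {v. cuts ! (s - 1) \<le> fst v \<and> fst v < k \<and> (Suc (fst v) = k \<longrightarrow> snd (snd v) = j)}"
  unfolding block_node_def using vars_lin_net[of "block_input s" d L P "cuts ! (s - 1)" "k - cuts ! (s - 1)" j]
  by simp

lemma virtual_poly_eq_prefix_mult_block_node:
  assumes "1 \<le> s" "s \<le> n" "cuts ! (s - 1) \<le> k"
  shows "virtual_poly d L P x0 j k = prod_list (take (s - 1) blocks) * block_node s k j"
  unfolding virtual_poly_def using assms
proof (induct s arbitrary: k j)
  case (Suc s)
  show ?case
  proof (cases "s = 0")
    case True
    then show ?thesis by (simp add: block_node_def block_input_def cuts_first)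
  next
    case False
    let ?a = "cuts ! s" and ?c = "unique_node d P (cuts ! s)"
    have s: "1 \<le> s" "s < n" using False Suc.prems by auto
    have a: "2 \<le> ?a" "?a < L" "\<forall>j. (?a, j) \<in> P \<longleftrightarrow> j = ?c"
      using unique_layer_node[OF cuts_inner] s by auto
    have "(?a - 1) + (k - ?a) = k - 1" "1 + (?a - 1) = ?a" using a Suc.prems by auto
    then have "lin_net d L P 1 X (k - 1) j =
        lin_net d L P 1 X (?a - 1) ?c * lin_net d L P ?a (\<lambda>j. if j = ?c then 1 else 0) (k - ?a) j"
      using lin_net_through_unique_node[where a = 1 and m = "?a - 1" and r = "k - ?a"] a by simp
    also have "lin_net d L P 1 X (?a - 1) ?c = prod_list (take (s - 1) blocks) * block_poly d L P x0 i s"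
      using Suc.hyps[of ?a ?c] s block_poly_eq_block_node[of s] cuts_strict_mono[of "s - 1" s]
      by (simp add: block_output_def)
    also have "prod_list (take (s - 1) blocks) * block_poly d L P x0 i s = prod_list (take s blocks)"
    proof -
      have "take (Suc (s - 1)) blocks = take (s - 1) blocks @ [blocks ! (s - 1)]"
        using s by (intro take_Suc_conv_app_nth) (simp del: upt_Suc)
      then show ?thesis using s by (simp del: upt_Suc)
    qed
    finally show ?thesis using False by (simp add: block_node_def block_input_def)
  qed
qed simp

lemma virtual_poly_eq_prod_blocks: "virtual_poly d L P x0 i L = prod_list blocks"
  using virtual_poly_eq_prefix_mult_block_node[of n L i] block_poly_eq_block_node[of n] cuts_last
    cuts_range[of "n - 1"]
  by (simp add: block_output_def)

lemma block_poly_nonzero: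
  assumes "1 \<le> s" "s \<le> n"
  shows "block_poly d L P x0 i s \<noteq> 0"
proof -
  have "block_poly d L P x0 i s \<in> set blocks"
    using assms nth_mem[of "s - 1" blocks] by (simp del: upt_Suc)
  then show ?thesis
    using virtual_poly_nonzero by (auto simp: virtual_poly_eq_prod_blocks prod_list_zero_iff simp del: upt_Suc)
qed

lemma block_node_active_nonzero:
  assumes "1 \<le> s" "s \<le> n" "cuts ! (s - 1) \<le> k" "(k, j) \<in> P"
  shows "block_node s k j \<noteq> 0"
  using virtual_poly_eq_prefix_mult_block_node[OF assms(1-3), of j] virtual_poly_nonzero_if_active[OF assms(4)]
  by auto

lemma block_node_inactive:
  assumes "cuts ! (s - 1) < k" "2 \<le> k" "k < L" "(k, j) \<notin> P"
  shows "block_node s k j = 0"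
proof -
  obtain k' where "k = Suc k'" using assms(2) by (cases k) auto
  then show ?thesis using block_node_Suc[of s k' j] assms by simp
qed

lemma block_layer_nonzero:
  assumes "1 \<le> s" "s \<le> n" "cuts ! (s - 1) \<le> k" "k < cuts ! s"
  shows "\<exists>j<d k. block_node s k j \<noteq> 0"
proof (rule ccontr)
  let ?a = "cuts ! (s - 1)"
  assume "\<not> ?thesis"
  then have "\<forall>j<d (?a + (k - ?a)). lin_net d L P ?a (block_input s) (k - ?a) j = 0"
    using assms(3) by (simp add: block_node_def)
  then have zero: "lin_net d L P ?a (block_input s) (Suc ((k - ?a) + (cuts ! s - k - 1))) (block_output s) = 0"
    by (rule lin_net_zero_propagates)
  have "Suc ((k - ?a) + (cuts ! s - k - 1)) = cuts ! s - ?a" using assms(3,4) by simp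
  then have "lin_net d L P ?a (block_input s) (cuts ! s - ?a) (block_output s) = 0"
    using zero by (simp only:)
  then have "block_poly d L P x0 i s = 0"
    using block_poly_eq_block_node[OF assms(1,2)] by (simp only: block_node_def)
  then show False using block_poly_nonzero[OF assms(1,2)] by simp
qed

lemma block_inner_layer_two_active:
  assumes s: "1 \<le> s" "s \<le> n" and k: "cuts ! (s - 1) < k" "k < cuts ! s"
  shows "\<exists>j1 j2. j1 \<noteq> j2 \<and> (k, j1) \<in> P \<and> (k, j2) \<in> P"
proof -
  let ?S = "{j. j < d k \<and> (k, j) \<in> P}"
  have "Suc (s - 1) = s" using s by simp
  then have "k \<notin> U" using not_unique_layer_between[of "s - 1" k] s k by (metis Suc_le_lessD)
  moreover have "1 \<le> cuts ! (s - 1)" "cuts ! s \<le> L" using cuts_range[of "s - 1"] cuts_range[of s] s by auto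
  then have k2: "2 \<le> k" and kL: "k < L" using k by linarith+
  ultimately have card: "card ?S \<noteq> 1" unfolding unique_layers_def by blast
  obtain j1 where "j1 < d k" "block_node s k j1 \<noteq> 0"
    using block_layer_nonzero[OF s less_imp_le[OF k(1)] k(2)] by blast
  then have j1: "j1 \<in> ?S" using block_node_inactive[OF k(1) k2 kL] by blast
  have "?S \<noteq> {j1}"
  proof
    assume "?S = {j1}"
    then have "card ?S = 1" by simp
    then show False using card by blast
  qed
  then obtain j2 where "j2 \<in> ?S" "j2 \<noteq> j1" using j1 by blast
  then show ?thesis using j1 by blast
qed

lemma input_nonzero: "\<exists>l<d 1. x0 l \<noteq> 0"
  using block_layer_nonzero[of 1 1] cuts_first cuts_strict_mono[of 0 1]
  by (auto simp: block_node_def block_input_def)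

lemma block_first_layer_coprime:
  assumes s: "1 \<le> s" "s \<le> n" and D: "\<forall>j<d (cuts ! (s - 1)). D dvd block_node s (cuts ! (s - 1)) j"
  shows "D dvd 1"
proof (cases "s = 1")
  case True
  obtain l where "l < d 1" "x0 l \<noteq> 0" using input_nonzero by blast
  then have "D dvd Const (x0 l)" and "Const (x0 l) dvd 1"
    using D True by (auto simp: block_node_def block_input_def cuts_first dvd_one_iff_Const)
  then show ?thesis by (rule dvd_trans)
next
  case False
  then have "unique_node d P (cuts ! (s - 1)) < d (cuts ! (s - 1))"
    using unique_layer_node[OF cuts_inner] s by simp
  then show ?thesis using D False by (auto simp: block_node_def block_input_def)
qed

text \<open>A common divisor \<open>D\<close> of layer \<open>Suc k\<close> divides the active node \<open>j2\<close>, so it contains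
  none of the variables on the edges into the other active node \<open>j1\<close>; comparing coefficients in
  the linear form of node \<open>j1\<close> then shows that \<open>D\<close> divides every node of layer \<open>k\<close>.\<close>

lemma block_common_divisor_backwards:
  assumes s: "1 \<le> s" "s \<le> n" and k: "cuts ! (s - 1) \<le> k" "Suc k < cuts ! s"
    and D: "\<forall>j<d (Suc k). D dvd block_node s (Suc k) j"
  shows "\<forall>j<d k. D dvd block_node s k j"
proof -
  obtain j1 j2 where j: "j1 \<noteq> j2" "(Suc k, j1) \<in> P" "(Suc k, j2) \<in> P"
    using block_inner_layer_two_active[OF s, of "Suc k"] k by auto
  have "j1 < d (Suc k)" "j2 < d (Suc k)" using active_node_bounds j(2,3) by auto
  then have D_dvd: "D dvd block_node s (Suc k) j1" "D dvd block_node s (Suc k) j2" using D by auto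
  moreover have "block_node s (Suc k) j2 \<noteq> 0" using block_node_active_nonzero[OF s _ j(3)] k by simp
  ultimately have "vars D \<subseteq> vars (block_node s (Suc k) j2)" by (intro vars_dvd)
  then have D_fresh: "(k, i', j1) \<notin> vars D" for i' using vars_block_node[of s "Suc k" j2] j(1) k by auto
  have "\<forall>i<d k. \<forall>i'<d k. (k, i', j1) \<notin> vars (block_node s k i)"
    using vars_block_node[OF k(1)] by fastforce
  then interpret linear_form "block_node s (Suc k) j1" "\<lambda>i'. (k, i', j1)" "block_node s k" "d k"
    using block_node_Suc[OF k(1), of j1] j(2) by unfold_locales (auto simp: inj_on_def)
  obtain i0 where i0: "i0 < d k" "block_node s k i0 \<noteq> 0"
    using block_layer_nonzero[OF s k(1)] k(2) by auto
  obtain H where "block_node s (Suc k) j1 = D * H" using D_dvd(1) by (rule dvdE)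
  then show ?thesis by (rule factor_dvd_coeffs[OF _ i0 D_fresh])
qed

lemma block_layer_coprime:
  assumes s: "1 \<le> s" "s \<le> n" and k: "cuts ! (s - 1) \<le> k" "k < cuts ! s"
    and "\<forall>j<d k. D dvd block_node s k j"
  shows "D dvd 1"
  using k assms(5)
proof (induct k rule: dec_induct)
  case base
  then show ?case using block_first_layer_coprime[OF s] by simp
next
  case (step k)
  then show ?case using block_common_divisor_backwards[OF s, of k] by simp
qed

lemma block_poly_irreducible:
  assumes s: "1 \<le> s" "s \<le> n"
  shows "irreducible (block_poly d L P x0 i s)"
proof -
  let ?a = "cuts ! (s - 1)" and ?B = "block_poly d L P x0 i s"
  define k where "k = cuts ! s - 1"
  have k: "cuts ! s = Suc k" "?a \<le> k" using cuts_strict_mono[of "s - 1" s] s by (auto simp: k_def)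
  have "?B \<noteq> 0" using block_poly_nonzero[OF s] .
  moreover have "?B = block_node s (Suc k) (block_output s)" using block_poly_eq_block_node[OF s] k by simp
  ultimately have B: "?B = (\<Sum>i'<d k. Var (k, i', block_output s) * block_node s k i')"
    using block_node_Suc[OF k(2), of "block_output s"] by (simp split: if_splits)
  have "\<forall>i<d k. \<forall>i'<d k. (k, i', block_output s) \<notin> vars (block_node s k i)"
    using vars_block_node[OF k(2)] by fastforce
  then interpret linear_form ?B "\<lambda>i'. (k, i', block_output s)" "block_node s k" "d k"
    using B by unfold_locales (auto simp: inj_on_def)
  show ?thesis
    using block_layer_coprime[OF s k(2)] k \<open>?B \<noteq> 0\<close> by (intro irreducible_if_coprime) auto
qed

lemma multilinear_virtual_poly: "multilinear (virtual_poly d L P x0 i L)"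
  unfolding virtual_poly_def by (rule multilinear_lin_net) simp

end

theorem theorem2p8:
  fixes d :: "nat \<Rightarrow> nat" and L :: nat and x0 :: "nat \<Rightarrow> real"
    and w0 :: "nat \<Rightarrow> nat \<Rightarrow> nat \<Rightarrow> real" and i :: nat
    and P :: "(nat \<times> nat) set" and u :: mpoly
  assumes "2 \<le> L" and "i < d L"
    and "P = activation_set d L w0 x0"
    and "u = virtual_poly d L P x0 i L"
    and "u \<noteq> 0"
  shows "(\<forall>n. (\<exists>gs. length gs = n \<and> (\<forall>g\<in>set gs. irreducible g) \<and> prod_list gs = u)
              \<longleftrightarrow> card (unique_layers d L P) + 1 = n)
       \<and> (\<forall>gs. (\<forall>g\<in>set gs. irreducible g) \<and> prod_list gs = u \<longrightarrow>
            (\<exists>p. bij_betw p {..<length gs} {..<length gs} \<and>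
                 (\<forall>s<length gs. \<exists>c. c \<noteq> 0 \<and>
                     gs ! p s = Const c * block_poly d L P x0 i (Suc s))))"
proof -
  interpret active_network d L x0 w0 i P
    using assms by unfold_locales auto
  have u: "u = prod_list blocks" using assms(4) virtual_poly_eq_prod_blocks by simp
  have irreducible: "\<forall>B\<in>set blocks. irreducible B"
    using block_poly_irreducible by (auto simp del: upt_Suc)
  have "multilinear (prod_list blocks)" using multilinear_virtual_poly u assms(4) by simp
  note unique = multilinear_unique_factorization[OF _ irreducible this]
  show ?thesis
  proof (intro conjI allI impI iffI)
    fix m assume "\<exists>gs. length gs = m \<and> (\<forall>g\<in>set gs. irreducible g) \<and> prod_list gs = u"
    then show "n = m" using unique u by (auto simp del: upt_Suc)
  next
    fix m assume "n = m"
    then show "\<exists>gs. length gs = m \<and> (\<forall>g\<in>set gs. irreducible g) \<and> prod_list gs = u"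
      using irreducible u by (intro exI[of _ blocks]) (simp del: upt_Suc)
  next
    fix gs assume "(\<forall>g\<in>set gs. irreducible g) \<and> prod_list gs = u"
    then show "\<exists>p. bij_betw p {..<length gs} {..<length gs} \<and>
        (\<forall>s<length gs. \<exists>c. c \<noteq> 0 \<and> gs ! p s = Const c * block_poly d L P x0 i (Suc s))"
      using unique[of gs] u by (auto simp del: upt_Suc)
  qed
qed

end
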